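(* If a polynomial $p\in\mathbb C[X_{12},X_{13},X_{23}]$ satisfies $\hat H_1^{(-2)}p=\hat H_2^{(-2)}p=\hat H_3^{(-2)}p=0$, then $p$ is constant. That is, $\ker\hat H_1^{(-2)}\cap\ker\hat H_2^{(-2)}\cap\ker\hat H_3^{(-2)}=\mathbb C$ on $\mathbb C[X_{12},X_{13},X_{23}]$.
   Context: The operators (with rational coefficients, mapping polynomials to rational functions) are $$\hat H_1^{(-2)}=\frac{\partial^2}{\partial X_{12}^2}+\frac{\partial^2}{\partial X_{13}^2}+\frac{X_{12}^2+X_{13}^2-X_{23}^2}{X_{12}X_{13}}\frac{\partial^2}{\partial X_{12}\partial X_{13}}+\frac{2}{X_{12}}\frac{\partial}{\partial X_{12}}+\frac{2}{X_{13}}\frac{\partial}{\partial X_{13}},$$ $$\hat H_2^{(-2)}=\frac{\partial^2}{\partial X_{12}^2}+\frac{\partial^2}{\partial X_{23}^2}+\frac{X_{12}^2+X_{23}^2-X_{13}^2}{X_{12}X_{23}}\frac{\partial^2}{\partial X_{12}\partial X_{23}}+\frac{2}{X_{12}}\frac{\partial}{\partial X_{12}}+\frac{2}{X_{23}}\frac{\partial}{\partial X_{23}},$$ $$\hat H_3^{(-2)}=\frac{\partial^2}{\partial X_{13}^2}+\frac{\partial^2}{\partial X_{23}^2}+\frac{X_{13}^2+X_{23}^2-X_{12}^2}{X_{13}X_{23}}\frac{\partial^2}{\partial X_{13}\partial X_{23}}+\frac{2}{X_{13}}\frac{\partial}{\partial X_{13}}+\frac{2}{X_{23}}\frac{\partial}{\partial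 X_{23}}.$$ *)

theory Defs
  imports Complex_Main
begin

text \<open>A polynomial in C[X12,X13,X23] is represented by its coefficient function
  on exponent triples (i,j,k) (monomial X12^i X13^j X23^k), with finite support.\<close>

type_synonym mpoly3 = "nat \<times> nat \<times> nat \<Rightarrow> complex"

definition is_poly3 :: "mpoly3 \<Rightarrow> bool" where
  "is_poly3 c \<longleftrightarrow> finite {m. c m \<noteq> 0}"

definition eval3 :: "mpoly3 \<Rightarrow> complex \<Rightarrow> complex \<Rightarrow> complex \<Rightarrow> complex" where
  "eval3 c x12 x13 x23 =
     (\<Sum>m\<in>{m. c m \<noteq> 0}. c m * x12 ^ fst m * x13 ^ fst (snd m) * x23 ^ snd (snd m))"

definition d12 :: "mpoly3 \<Rightarrow> mpoly3" where
  "d12 c = (\<lambda>(i,j,k). of_nat (Suc i) * c (Suc i, j, k))"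
definition d13 :: "mpoly3 \<Rightarrow> mpoly3" where
  "d13 c = (\<lambda>(i,j,k). of_nat (Suc j) * c (i, Suc j, k))"
definition d23 :: "mpoly3 \<Rightarrow> mpoly3" where
  "d23 c = (\<lambda>(i,j,k). of_nat (Suc k) * c (i, j, Suc k))"

definition H1 :: "mpoly3 \<Rightarrow> complex \<Rightarrow> complex \<Rightarrow> complex \<Rightarrow> complex" where
  "H1 p x12 x13 x23 =
     eval3 (d12 (d12 p)) x12 x13 x23 + eval3 (d13 (d13 p)) x12 x13 x23
     + (x12^2 + x13^2 - x23^2) / (x12 * x13) * eval3 (d12 (d13 p)) x12 x13 x23
     + 2 / x12 * eval3 (d12 p) x12 x13 x23 + 2 / x13 * eval3 (d13 p) x12 x13 x23"

definition H2 :: "mpoly3 \<Rightarrow> complex \<Rightarrow> complex \<Rightarrow> complex \<Rightarrow> complex" where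
  "H2 p x12 x13 x23 =
     eval3 (d12 (d12 p)) x12 x13 x23 + eval3 (d23 (d23 p)) x12 x13 x23
     + (x12^2 + x23^2 - x13^2) / (x12 * x23) * eval3 (d12 (d23 p)) x12 x13 x23
     + 2 / x12 * eval3 (d12 p) x12 x13 x23 + 2 / x23 * eval3 (d23 p) x12 x13 x23"

definition H3 :: "mpoly3 \<Rightarrow> complex \<Rightarrow> complex \<Rightarrow> complex \<Rightarrow> complex" where
  "H3 p x12 x13 x23 =
     eval3 (d13 (d13 p)) x12 x13 x23 + eval3 (d23 (d23 p)) x12 x13 x23
     + (x13^2 + x23^2 - x12^2) / (x13 * x23) * eval3 (d13 (d23 p)) x12 x13 x23
     + 2 / x13 * eval3 (d13 p) x12 x13 x23 + 2 / x23 * eval3 (d23 p) x12 x13 x23"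

definition is_const3 :: "mpoly3 \<Rightarrow> bool" where
  "is_const3 c \<longleftrightarrow> (\<forall>m. m \<noteq> (0,0,0) \<longrightarrow> c m = 0)"

end

theory Submission
  imports Defs
begin

(* Multiplying H1 p = 0 by X12^2 X13^2 gives a polynomial identity whose coefficient at
   X12^a X13^b X23^c is the recurrence
     (a + b - 1) (a p[a, b-2, c] + b p[a-2, b, c]) = a b p[a, b, c-2],
   coefficients with a negative index being zero.  H2 and H3 are H1 after a permutation of the
   variables, so they give the same recurrence for permuted coefficient arrays.  For a, b, c > 0
   the three recurrences at (a, b, c) are a linear system in p[a, b-2, c], p[a-2, b, c],
   p[a, b, c-2] with determinant a b c (a+b+c-1)^2 (a+b+c-2), which is nonzero; hence every
   coefficient with two positive indices vanishes.  A coefficient p[d, 0, 0] with d > 0 then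
   vanishes by the recurrences at (d, 2, 0), (d, 0, 2) and (d-2, 2, 2), and likewise on the
   other two axes. *)

definition monom3 :: "nat \<times> nat \<times> nat \<Rightarrow> 'a::comm_semiring_1 \<Rightarrow> 'a \<Rightarrow> 'a \<Rightarrow> 'a" where
  "monom3 m x y z = x ^ fst m * y ^ fst (snd m) * z ^ snd (snd m)"

lemma monom3_simps [simp]: "monom3 (i, j, k) x y z = x ^ i * y ^ j * z ^ k"
  by (simp add: monom3_def)

lemma eval3_conv_monom3: "eval3 c x y z = (\<Sum>m\<in>{m. c m \<noteq> 0}. c m * monom3 m x y z)"
  unfolding eval3_def monom3_def by (simp add: mult.assoc)

lemma eval3_conv_sum:
  assumes "finite S" and "{m. c m \<noteq> 0} \<subseteq> S"
  shows "eval3 c x y z = (\<Sum>m\<in>S. c m * monom3 m x y z)"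
  unfolding eval3_conv_monom3 by (rule sum.mono_neutral_left) (use assms in auto)

lemma finite_triples_bounded:
  fixes S :: "(nat \<times> nat \<times> nat) set"
  assumes "finite S"
  obtains N where "S \<subseteq> {..N} \<times> {..N} \<times> {..N}"
proof -
  have "\<exists>N. S \<subseteq> {..N} \<times> {..N} \<times> {..N}"
    using assms
  proof (induction rule: finite_induct)
    case (insert m S)
    then obtain N where "S \<subseteq> {..N} \<times> {..N} \<times> {..N}" by blast
    moreover obtain i j k where "m = (i, j, k)" by (cases m)
    ultimately have "insert m S \<subseteq> {..N + i + j + k} \<times> {..N + i + j + k} \<times> {..N + i + j + k}"
      by force
    then show ?case by blast
  qed simp
  then show ?thesis using that by blast
qed

lemma polyfun_eq_0_if_vanishes_off_zero:
  fixes c :: "nat \<Rightarrow> 'a::{idom,real_normed_div_algebra}"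
  assumes "\<And>x. x \<noteq> 0 \<Longrightarrow> (\<Sum>i\<le>n. c i * x ^ i) = 0"
  shows "\<forall>i\<le>n. c i = 0"
proof (rule ccontr)
  assume "\<not> (\<forall>i\<le>n. c i = 0)"
  then have "finite {x. (\<Sum>i\<le>n. c i * x ^ i) = 0}"
    using polyfun_finite_roots by blast
  moreover have "- {0} \<subseteq> {x. (\<Sum>i\<le>n. c i * x ^ i) = 0}"
    using assms by auto
  ultimately have "finite (- {0::'a})"
    using finite_subset by blast
  then show False
    using infinite_UNIV_char_0[where 'a='a] by simp
qed

lemma poly3_eq_0_if_eval3_eq_0:
  assumes "is_poly3 c"
    and "\<And>x y z. x \<noteq> 0 \<Longrightarrow> y \<noteq> 0 \<Longrightarrow> z \<noteq> 0 \<Longrightarrow> eval3 c x y z = 0"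
  shows "c m = 0"
proof -
  obtain N where N: "{m. c m \<noteq> 0} \<subseteq> {..N} \<times> {..N} \<times> {..N}"
    using assms(1) finite_triples_bounded unfolding is_poly3_def by blast
  have eval: "eval3 c x y z = (\<Sum>i\<le>N. (\<Sum>j\<le>N. (\<Sum>k\<le>N. c (i,j,k) * z^k) * y^j) * x^i)" for x y z
  proof -
    have "eval3 c x y z = (\<Sum>i\<le>N. \<Sum>j\<le>N. \<Sum>k\<le>N. c (i,j,k) * monom3 (i,j,k) x y z)"
      by (simp add: eval3_conv_sum[OF _ N] sum.cartesian_product split_def monom3_def)
    then show ?thesis
      by (simp add: sum_distrib_left sum_distrib_right mult_ac)
  qed
  have "\<forall>i\<le>N. (\<Sum>j\<le>N. (\<Sum>k\<le>N. c (i,j,k) * z^k) * y^j) = 0" if "y \<noteq> 0" "z \<noteq> 0" for y z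
    by (rule polyfun_eq_0_if_vanishes_off_zero) (use assms(2) that in \<open>simp add: eval\<close>)
  then have "\<forall>j\<le>N. (\<Sum>k\<le>N. c (i,j,k) * z^k) = 0" if "z \<noteq> 0" "i \<le> N" for i z
    using that by (intro polyfun_eq_0_if_vanishes_off_zero) auto
  then have "\<forall>k\<le>N. c (i,j,k) = 0" if "i \<le> N" "j \<le> N" for i j
    using that by (intro polyfun_eq_0_if_vanishes_off_zero) auto
  then show ?thesis
    using N by (cases m) fastforce
qed

lemma is_poly3_add: "is_poly3 f \<Longrightarrow> is_poly3 g \<Longrightarrow> is_poly3 (\<lambda>m. f m + g m)"
  unfolding is_poly3_def by (rule finite_subset[of _ "{m. f m \<noteq> 0} \<union> {m. g m \<noteq> 0}"]) auto

lemma is_poly3_diff: "is_poly3 f \<Longrightarrow> is_poly3 g \<Longrightarrow> is_poly3 (\<lambda>m. f m - g m)"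
  unfolding is_poly3_def by (rule finite_subset[of _ "{m. f m \<noteq> 0} \<union> {m. g m \<noteq> 0}"]) auto

lemma eval3_add:
  assumes "is_poly3 f" "is_poly3 g"
  shows "eval3 (\<lambda>m. f m + g m) x y z = eval3 f x y z + eval3 g x y z"
proof -
  let ?S = "{m. f m \<noteq> 0} \<union> {m. g m \<noteq> 0}"
  have "finite ?S" using assms unfolding is_poly3_def by simp
  then show ?thesis
    by (subst (1 2 3) eval3_conv_sum[of ?S]) (auto simp: sum.distrib algebra_simps)
qed

lemma eval3_diff:
  assumes "is_poly3 f" "is_poly3 g"
  shows "eval3 (\<lambda>m. f m - g m) x y z = eval3 f x y z - eval3 g x y z"
proof -
  let ?S = "{m. f m \<noteq> 0} \<union> {m. g m \<noteq> 0}"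
  have "finite ?S" using assms unfolding is_poly3_def by simp
  then show ?thesis
    by (subst (1 2 3) eval3_conv_sum[of ?S]) (auto simp: sum_subtractf algebra_simps)
qed

lemma poly3_coeffs_eq_if_eval3_eq:
  assumes "is_poly3 f" "is_poly3 g"
    and "\<And>x y z. x \<noteq> 0 \<Longrightarrow> y \<noteq> 0 \<Longrightarrow> z \<noteq> 0 \<Longrightarrow> eval3 f x y z = eval3 g x y z"
  shows "f m = g m"
  using poly3_eq_0_if_eval3_eq_0[OF is_poly3_diff[OF assms(1,2)], of m]
  by (simp add: eval3_diff assms)

fun shift3 :: "nat \<times> nat \<times> nat \<Rightarrow> mpoly3 \<Rightarrow> mpoly3" where
  "shift3 (a, b, c) f (i, j, k) =
     (if a \<le> i \<and> b \<le> j \<and> c \<le> k then f (i - a, j - b, k - c) else 0)"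

definition weight3 :: "(nat \<Rightarrow> nat \<Rightarrow> nat \<Rightarrow> complex) \<Rightarrow> mpoly3 \<Rightarrow> mpoly3" where
  "weight3 w f = (\<lambda>(i, j, k). w i j k * f (i, j, k))"

lemma shift3_support:
  "{m. shift3 (a, b, c) f m \<noteq> 0} \<subseteq> (\<lambda>(i, j, k). (i + a, j + b, k + c)) ` {m. f m \<noteq> 0}"
proof
  fix m assume "m \<in> {m. shift3 (a, b, c) f m \<noteq> 0}"
  moreover obtain i j k where "m = (i, j, k)" by (cases m)
  ultimately show "m \<in> (\<lambda>(i, j, k). (i + a, j + b, k + c)) ` {m. f m \<noteq> 0}"
    by (auto split: if_splits intro!: rev_image_eqI[of "(i - a, j - b, k - c)"])
qed

lemma is_poly3_shift3: "is_poly3 f \<Longrightarrow> is_poly3 (shift3 e f)"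
  using shift3_support[of "fst e" "fst (snd e)" "snd (snd e)" f] finite_surj
  unfolding is_poly3_def by (metis prod.collapse)

lemma eval3_shift3:
  assumes "is_poly3 f"
  shows "eval3 (shift3 (a, b, c) f) x y z = x ^ a * y ^ b * z ^ c * eval3 f x y z"
proof -
  let ?S = "{m. f m \<noteq> 0}" and ?t = "\<lambda>(i, j, k). (i + a, j + b, k + c)"
  have fin: "finite ?S" using assms unfolding is_poly3_def .
  have "inj ?t" by (auto simp: inj_def)
  then have "eval3 (shift3 (a, b, c) f) x y z
      = (\<Sum>m\<in>?S. shift3 (a, b, c) f (?t m) * monom3 (?t m) x y z)"
    using eval3_conv_sum[OF finite_imageI[OF fin] shift3_support]
    by (simp add: sum.reindex inj_on_def)
  also have "\<dots> = (\<Sum>m\<in>?S. x ^ a * y ^ b * z ^ c * (f m * monom3 m x y z))"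
    by (intro sum.cong) (auto simp: power_add mult_ac)
  finally show ?thesis
    by (simp add: eval3_conv_sum[OF fin] sum_distrib_left)
qed

lemma weight3_support: "{m. weight3 w f m \<noteq> 0} \<subseteq> {m. f m \<noteq> 0}"
  by (auto simp: weight3_def)

lemma is_poly3_weight3: "is_poly3 f \<Longrightarrow> is_poly3 (weight3 w f)"
  unfolding is_poly3_def using weight3_support finite_subset by blast

lemma eval3_weight3_add:
  assumes "is_poly3 f"
  shows "eval3 (weight3 (\<lambda>i j k. u i j k + v i j k) f) x y z
       = eval3 (weight3 u f) x y z + eval3 (weight3 v f) x y z"
proof -
  have "weight3 (\<lambda>i j k. u i j k + v i j k) f = (\<lambda>m. weight3 u f m + weight3 v f m)"
    by (auto simp: weight3_def algebra_simps)
  then show ?thesis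
    by (simp add: eval3_add is_poly3_weight3 assms)
qed

lemma eval3_weight3_cmult:
  assumes "is_poly3 f"
  shows "eval3 (weight3 (\<lambda>i j k. a * u i j k) f) x y z = a * eval3 (weight3 u f) x y z"
proof -
  have fin: "finite {m. f m \<noteq> 0}" using assms unfolding is_poly3_def .
  show ?thesis
    by (simp add: eval3_conv_sum[OF fin weight3_support] sum_distrib_left)
      (auto simp: weight3_def mult_ac intro!: sum.cong)
qed

lemma is_poly3_d12: "is_poly3 f \<Longrightarrow> is_poly3 (d12 f)"
  unfolding is_poly3_def
  by (rule finite_subset[OF _ finite_vimageI[of _ "\<lambda>(i, j, k). (Suc i, j, k)"]])
    (auto simp: d12_def inj_def)

lemma is_poly3_d13: "is_poly3 f \<Longrightarrow> is_poly3 (d13 f)"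
  unfolding is_poly3_def
  by (rule finite_subset[OF _ finite_vimageI[of _ "\<lambda>(i, j, k). (i, Suc j, k)"]])
    (auto simp: d13_def inj_def)

lemma shift3_d12: "shift3 (1, 0, 0) (d12 f) = weight3 (\<lambda>i j k. of_nat i) f"
  by (auto simp: fun_eq_iff weight3_def d12_def)

lemma shift3_d13: "shift3 (0, 1, 0) (d13 f) = weight3 (\<lambda>i j k. of_nat j) f"
  by (auto simp: fun_eq_iff weight3_def d13_def)

lemma shift3_d12_d13: "shift3 (1, 1, 0) (d12 (d13 f)) = weight3 (\<lambda>i j k. of_nat i * of_nat j) f"
  by (auto simp: fun_eq_iff weight3_def d12_def d13_def)

lemma shift3_d12_d12:
  "shift3 (2, 0, 0) (d12 (d12 f)) = weight3 (\<lambda>i j k. of_nat i * (of_nat i - 1)) f"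
  by (auto simp: fun_eq_iff weight3_def d12_def of_nat_diff algebra_simps numeral_2_eq_2
      Suc_diff_Suc simp del: of_nat_Suc)

lemma shift3_d13_d13:
  "shift3 (0, 2, 0) (d13 (d13 f)) = weight3 (\<lambda>i j k. of_nat j * (of_nat j - 1)) f"
  by (auto simp: fun_eq_iff weight3_def d13_def of_nat_diff algebra_simps numeral_2_eq_2
      Suc_diff_Suc simp del: of_nat_Suc)

lemma H1_clear_denominators:
  assumes p: "is_poly3 p" and "x \<noteq> 0" "y \<noteq> 0"
  shows "x\<^sup>2 * y\<^sup>2 * H1 p x y z
       = y\<^sup>2 * eval3 (weight3 (\<lambda>i j k. of_nat i * (of_nat i + of_nat j + 1)) p) x y z
       + x\<^sup>2 * eval3 (weight3 (\<lambda>i j k. of_nat j * (of_nat i + of_nat j + 1)) p) x y z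
       - z\<^sup>2 * eval3 (weight3 (\<lambda>i j k. of_nat i * of_nat j) p) x y z"
proof -
  have d: "is_poly3 (d12 p)" "is_poly3 (d13 p)" "is_poly3 (d12 (d12 p))" "is_poly3 (d13 (d13 p))"
    "is_poly3 (d12 (d13 p))"
    using p by (simp_all add: is_poly3_d12 is_poly3_d13)
  let ?E = "\<lambda>w. eval3 (weight3 w p) x y z"
  have euler:
    "x * eval3 (d12 p) x y z = ?E (\<lambda>i j k. of_nat i)"
    "y * eval3 (d13 p) x y z = ?E (\<lambda>i j k. of_nat j)"
    "x\<^sup>2 * eval3 (d12 (d12 p)) x y z = ?E (\<lambda>i j k. of_nat i * (of_nat i - 1))"
    "y\<^sup>2 * eval3 (d13 (d13 p)) x y z = ?E (\<lambda>i j k. of_nat j * (of_nat j - 1))"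
    "x * y * eval3 (d12 (d13 p)) x y z = ?E (\<lambda>i j k. of_nat i * of_nat j)"
    using eval3_shift3[OF d(1), of 1 0 0 x y z] eval3_shift3[OF d(2), of 0 1 0 x y z]
      eval3_shift3[OF d(3), of 2 0 0 x y z] eval3_shift3[OF d(4), of 0 2 0 x y z]
      eval3_shift3[OF d(5), of 1 1 0 x y z]
    unfolding shift3_d12 shift3_d13 shift3_d12_d12 shift3_d13_d13 shift3_d12_d13
    by simp_all
  have "weight3 (\<lambda>i j k. of_nat i * (of_nat i + of_nat j + 1)) p
      = weight3 (\<lambda>i j k. of_nat i * (of_nat i - 1) + of_nat i * of_nat j + 2 * of_nat i) p"
    by (simp add: weight3_def algebra_simps)
  then have F: "?E (\<lambda>i j k. of_nat i * (of_nat i + of_nat j + 1))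
      = x\<^sup>2 * eval3 (d12 (d12 p)) x y z + x * y * eval3 (d12 (d13 p)) x y z
        + 2 * (x * eval3 (d12 p) x y z)"
    by (simp add: euler eval3_weight3_add eval3_weight3_cmult p)
  have "weight3 (\<lambda>i j k. of_nat j * (of_nat i + of_nat j + 1)) p
      = weight3 (\<lambda>i j k. of_nat j * (of_nat j - 1) + of_nat i * of_nat j + 2 * of_nat j) p"
    by (simp add: weight3_def algebra_simps)
  then have G: "?E (\<lambda>i j k. of_nat j * (of_nat i + of_nat j + 1))
      = y\<^sup>2 * eval3 (d13 (d13 p)) x y z + x * y * eval3 (d12 (d13 p)) x y z
        + 2 * (y * eval3 (d13 p) x y z)"
    by (simp add: euler eval3_weight3_add eval3_weight3_cmult p)
  show ?thesis
    unfolding F G euler(5)[symmetric] H1_def using assms(2,3)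
    by (simp add: field_simps power2_eq_square)
qed

definition coeff3 :: "mpoly3 \<Rightarrow> int \<Rightarrow> int \<Rightarrow> int \<Rightarrow> complex" where
  "coeff3 p i j k = (if 0 \<le> i \<and> 0 \<le> j \<and> 0 \<le> k then p (nat i, nat j, nat k) else 0)"

lemma coeff3_neg: "i < 0 \<or> j < 0 \<or> k < 0 \<Longrightarrow> coeff3 p i j k = 0"
  by (auto simp: coeff3_def)

lemma is_const3_if_coeff3_eq_0:
  assumes "\<And>i j k. (i, j, k) \<noteq> (0, 0, 0) \<Longrightarrow> coeff3 p i j k = 0"
  shows "is_const3 p"
  unfolding is_const3_def
proof (intro allI impI)
  fix m :: "nat \<times> nat \<times> nat"
  assume "m \<noteq> (0, 0, 0)"
  moreover obtain a b c where m: "m = (a, b, c)" by (cases m)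
  ultimately have "coeff3 p (int a) (int b) (int c) = 0"
    using assms[of "int a" "int b" "int c"] by auto
  then show "p m = 0"
    by (simp add: coeff3_def m)
qed

definition H1_recurrence :: "(int \<Rightarrow> int \<Rightarrow> int \<Rightarrow> 'a::comm_ring_1) \<Rightarrow> bool" where
  "H1_recurrence P \<longleftrightarrow> (\<forall>a b c.
     of_int (a + b - 1) * (of_int a * P a (b - 2) c + of_int b * P (a - 2) b c)
       = of_int (a * b) * P a b (c - 2))"

lemma H1_recurrence_if_H1_eq_0:
  assumes p: "is_poly3 p" and H1: "\<And>x y z. x \<noteq> 0 \<Longrightarrow> y \<noteq> 0 \<Longrightarrow> H1 p x y z = 0"
  shows "H1_recurrence (coeff3 p)"
proof -
  define F where "F = weight3 (\<lambda>i j k. of_nat i * (of_nat i + of_nat j + 1)) p"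
  define G where "G = weight3 (\<lambda>i j k. of_nat j * (of_nat i + of_nat j + 1)) p"
  define K where "K = weight3 (\<lambda>i j k. of_nat i * of_nat j) p"
  have FGK: "is_poly3 F" "is_poly3 G" "is_poly3 K"
    unfolding F_def G_def K_def using p by (simp_all add: is_poly3_weight3)
  have coeffs: "shift3 (0, 2, 0) F m + shift3 (2, 0, 0) G m = shift3 (0, 0, 2) K m" for m
  proof (rule poly3_coeffs_eq_if_eval3_eq)
    show "is_poly3 (\<lambda>m. shift3 (0, 2, 0) F m + shift3 (2, 0, 0) G m)" "is_poly3 (shift3 (0, 0, 2) K)"
      using FGK by (simp_all add: is_poly3_add is_poly3_shift3)
  next
    fix x y z :: complex assume "x \<noteq> 0" "y \<noteq> 0" "z \<noteq> 0"
    then have "y\<^sup>2 * eval3 F x y z + x\<^sup>2 * eval3 G x y z - z\<^sup>2 * eval3 K x y z = 0"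
      using H1_clear_denominators[OF p, of x y z] H1 unfolding F_def G_def K_def by simp
    then show "eval3 (\<lambda>m. shift3 (0, 2, 0) F m + shift3 (2, 0, 0) G m) x y z
        = eval3 (shift3 (0, 0, 2) K) x y z"
      using FGK by (simp add: eval3_add is_poly3_shift3 eval3_shift3 algebra_simps)
  qed
  show ?thesis
    unfolding H1_recurrence_def
  proof (intro allI)
    fix a b c :: int
    show "of_int (a + b - 1) * (of_int a * coeff3 p a (b - 2) c + of_int b * coeff3 p (a - 2) b c)
        = of_int (a * b) * coeff3 p a b (c - 2)"
    proof (cases "0 \<le> a \<and> 0 \<le> b \<and> 0 \<le> c")
      case True
      then obtain i j k where "a = int i" "b = int j" "c = int k"
        by (metis nonneg_int_cases)
      then show ?thesis
        using coeffs[of "(i, j, k)"]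
        by (auto simp: coeff3_def F_def G_def K_def weight3_def of_nat_diff nat_diff_distrib
            algebra_simps)
    qed (auto simp: coeff3_def)
  qed
qed

fun swap23 :: "nat \<times> nat \<times> nat \<Rightarrow> nat \<times> nat \<times> nat" where
  "swap23 (i, j, k) = (i, k, j)"

fun rot3 :: "nat \<times> nat \<times> nat \<Rightarrow> nat \<times> nat \<times> nat" where
  "rot3 (i, j, k) = (k, i, j)"

lemma is_poly3_comp: "inj \<sigma> \<Longrightarrow> is_poly3 p \<Longrightarrow> is_poly3 (p \<circ> \<sigma>)"
  unfolding is_poly3_def by (drule finite_vimageI) (auto simp: vimage_def)

lemma eval3_comp:
  assumes "\<And>m. \<sigma> (\<tau> m) = m" "\<And>m. \<tau> (\<sigma> m) = m"
    and "\<And>m. monom3 (\<sigma> m) x' y' z' = monom3 m x y z"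
  shows "eval3 (p \<circ> \<sigma>) x y z = eval3 p x' y' z'"
  unfolding eval3_conv_monom3
  by (rule sum.reindex_bij_witness[of _ \<tau> \<sigma>]) (auto simp: assms)

lemma H2_eq_H1_swap23: "H2 p x y z = H1 (p \<circ> swap23) x z y"
proof -
  have "d12 (f \<circ> swap23) = d12 f \<circ> swap23" "d13 (f \<circ> swap23) = d23 f \<circ> swap23" for f
    by (auto simp: fun_eq_iff d12_def d13_def d23_def)
  moreover have "eval3 (f \<circ> swap23) x z y = eval3 f x y z" for f
    by (rule eval3_comp[of _ swap23]) auto
  ultimately show ?thesis
    by (simp add: H1_def H2_def)
qed

lemma H3_eq_H1_rot3: "H3 p x y z = H1 (p \<circ> rot3) y z x"
proof -
  have "d12 (f \<circ> rot3) = d13 f \<circ> rot3" "d13 (f \<circ> rot3) = d23 f \<circ> rot3" for f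
    by (auto simp: fun_eq_iff d12_def d13_def d23_def)
  moreover have "eval3 (f \<circ> rot3) y z x = eval3 f x y z" for f
    by (rule eval3_comp[of _ "\<lambda>(i, j, k). (j, k, i)"]) (auto simp: mult_ac)
  ultimately show ?thesis
    by (simp add: H1_def H3_def)
qed

lemma coeff3_comp_swap23: "coeff3 (p \<circ> swap23) = (\<lambda>i j k. coeff3 p i k j)"
  by (auto simp: fun_eq_iff coeff3_def)

lemma coeff3_comp_rot3: "coeff3 (p \<circ> rot3) = (\<lambda>i j k. coeff3 p k i j)"
  by (auto simp: fun_eq_iff coeff3_def)

lemma H1_recurrence_if_H2_eq_0:
  assumes "is_poly3 p" and "\<And>x y z. x \<noteq> 0 \<Longrightarrow> z \<noteq> 0 \<Longrightarrow> H2 p x y z = 0"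
  shows "H1_recurrence (\<lambda>i j k. coeff3 p i k j)"
proof -
  have "inj swap23" by (auto simp: inj_def)
  moreover have "H1 (p \<circ> swap23) x y z = 0" if "x \<noteq> 0" "y \<noteq> 0" for x y z
    using H2_eq_H1_swap23[of p x z y] assms(2) that by simp
  ultimately have "H1_recurrence (coeff3 (p \<circ> swap23))"
    by (intro H1_recurrence_if_H1_eq_0 is_poly3_comp assms(1))
  then show ?thesis by (simp add: coeff3_comp_swap23)
qed

lemma H1_recurrence_if_H3_eq_0:
  assumes "is_poly3 p" and "\<And>x y z. y \<noteq> 0 \<Longrightarrow> z \<noteq> 0 \<Longrightarrow> H3 p x y z = 0"
  shows "H1_recurrence (\<lambda>i j k. coeff3 p k i j)"
proof -
  have "inj rot3" by (auto simp: inj_def)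
  moreover have "H1 (p \<circ> rot3) x y z = 0" if "x \<noteq> 0" "y \<noteq> 0" for x y z
    using H3_eq_H1_rot3[of p z x y] assms(2) that by simp
  ultimately have "H1_recurrence (coeff3 (p \<circ> rot3))"
    by (intro H1_recurrence_if_H1_eq_0 is_poly3_comp assms(1))
  then show ?thesis by (simp add: coeff3_comp_rot3)
qed

lemma H1_system_trivial_solution:
  fixes a b c u v w :: "'a::idom"
  assumes "(a + b - 1) * (a * u + b * v) = a * b * w"
    and "(a + c - 1) * (a * w + c * v) = a * c * u"
    and "(b + c - 1) * (b * w + c * u) = b * c * v"
    and "a * b * c * (a + b + c - 1) * (a + b + c - 2) \<noteq> 0"
  shows "u = 0 \<and> v = 0 \<and> w = 0"
proof -
  have "a * b * c * (a + b + c - 1)^2 * (a + b + c - 2) * u = 0"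
    "a * b * c * (a + b + c - 1)^2 * (a + b + c - 2) * v = 0"
    "a * b * c * (a + b + c - 1)^2 * (a + b + c - 2) * w = 0"
    using assms(1-3) by algebra+
  with assms(4) show ?thesis by simp
qed

lemma axis_system_trivial_solution:
  fixes d :: int and t s s' :: "'a::field_char_0"
  assumes "0 < d"
    and "(of_int d + 1) * (of_int d * t + 2 * s) = 0"
    and "(of_int d + 1) * (of_int d * t + 2 * s') = 0"
    and "s + s' = 0"
  shows "t = 0"
proof -
  have "d + 1 \<noteq> 0" using assms(1) by simp
  then have "of_int d + 1 \<noteq> (0 :: 'a)"
    by (metis of_int_1 of_int_add of_int_eq_0_iff)
  then have t_s: "of_int d * t + 2 * s = 0" and "of_int d * t + 2 * s' = 0"
    using assms(2,3) by simp_all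
  then have "2 * s = 2 * s'" by (metis add_left_cancel)
  with assms(4) have "s = 0" by simp
  with t_s assms(1) show ?thesis by simp
qed

context
  fixes P :: "int \<Rightarrow> int \<Rightarrow> int \<Rightarrow> 'a::field_char_0"
  assumes P_neg: "\<And>i j k. i < 0 \<or> j < 0 \<or> k < 0 \<Longrightarrow> P i j k = 0"
    and H1_rec: "H1_recurrence P"
    and H2_rec: "H1_recurrence (\<lambda>i j k. P i k j)"
    and H3_rec: "H1_recurrence (\<lambda>i j k. P k i j)"
begin

(* H2_row at (a, c, b) and H3_row at (b, c, a) are the recurrences of H2 and H3 at (a, b, c). *)
lemmas H1_row = H1_rec[unfolded H1_recurrence_def, rule_format]
lemmas H2_row = H2_rec[unfolded H1_recurrence_def, rule_format]
lemmas H3_row = H3_rec[unfolded H1_recurrence_def, rule_format]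

lemma H1_recurrences_neighbours_vanish:
  assumes "0 < a" "0 < b" "0 < c"
  shows "P a (b - 2) c = 0 \<and> P (a - 2) b c = 0 \<and> P a b (c - 2) = 0"
proof (rule H1_system_trivial_solution[where a = "of_int a" and b = "of_int b" and c = "of_int c"])
  show "(of_int a + of_int b - 1) * (of_int a * P a (b - 2) c + of_int b * P (a - 2) b c)
      = of_int a * of_int b * P a b (c - 2)"
    using H1_row[of a b c] by simp
  show "(of_int a + of_int c - 1) * (of_int a * P a b (c - 2) + of_int c * P (a - 2) b c)
      = of_int a * of_int c * P a (b - 2) c"
    using H2_row[of a c b] by simp
  show "(of_int b + of_int c - 1) * (of_int b * P a b (c - 2) + of_int c * P a (b - 2) c)
      = of_int b * of_int c * P (a - 2) b c"
    using H3_row[of b c a] by simp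
  have "a * b * c * (a + b + c - 1) * (a + b + c - 2) \<noteq> 0"
    using assms by simp
  then show "of_int a * of_int b * of_int c * (of_int a + of_int b + of_int c - 1)
      * (of_int a + of_int b + of_int c - 2) \<noteq> (0 :: 'a)"
    by (metis (mono_tags, opaque_lifting) of_int_1 of_int_add of_int_diff of_int_eq_0_iff
        of_int_mult of_int_numeral)
qed

lemma H1_recurrences_vanish_off_axes:
  assumes "0 < i \<and> 0 < j \<or> 0 < i \<and> 0 < k \<or> 0 < j \<and> 0 < k"
  shows "P i j k = 0"
proof (cases "i < 0 \<or> j < 0 \<or> k < 0")
  case False
  then show ?thesis
    using assms H1_recurrences_neighbours_vanish[of i "j + 2" k]
      H1_recurrences_neighbours_vanish[of "i + 2" j k]
      H1_recurrences_neighbours_vanish[of i j "k + 2"]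
    by auto
qed (use P_neg in blast)

lemma H1_recurrences_vanish_on_axes:
  assumes "0 < d"
  shows "P d 0 0 = 0" and "P 0 d 0 = 0" and "P 0 0 d = 0"
proof -
  show "P d 0 0 = 0"
  proof (rule axis_system_trivial_solution[OF assms])
    show "(of_int d + 1) * (of_int d * P d 0 0 + 2 * P (d - 2) 2 0) = 0"
      using H1_row[of d 2 0] P_neg[of d 2 "-2"] by (simp add: algebra_simps)
    show "(of_int d + 1) * (of_int d * P d 0 0 + 2 * P (d - 2) 0 2) = 0"
      using H2_row[of d 2 0] P_neg[of d "-2" 2] by (simp add: algebra_simps)
    have "6 * (P (d - 2) 2 0 + P (d - 2) 0 2) = 0"
      using H3_row[of 2 2 "d - 2"] H1_recurrences_vanish_off_axes[of "d - 4" 2 2]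
      by (simp add: algebra_simps)
    then show "P (d - 2) 2 0 + P (d - 2) 0 2 = 0"
      by (metis mult_eq_0_iff zero_neq_numeral)
  qed
  show "P 0 d 0 = 0"
  proof (rule axis_system_trivial_solution[OF assms])
    show "(of_int d + 1) * (of_int d * P 0 d 0 + 2 * P 2 (d - 2) 0) = 0"
      using H1_row[of 2 d 0] P_neg[of 2 d "-2"] by (simp add: algebra_simps)
    show "(of_int d + 1) * (of_int d * P 0 d 0 + 2 * P 0 (d - 2) 2) = 0"
      using H3_row[of d 2 0] P_neg[of "-2" d 2] by (simp add: algebra_simps)
    have "6 * (P 2 (d - 2) 0 + P 0 (d - 2) 2) = 0"
      using H2_row[of 2 2 "d - 2"] H1_recurrences_vanish_off_axes[of 2 "d - 4" 2]
      by (simp add: algebra_simps)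
    then show "P 2 (d - 2) 0 + P 0 (d - 2) 2 = 0"
      by (metis mult_eq_0_iff zero_neq_numeral)
  qed
  show "P 0 0 d = 0"
  proof (rule axis_system_trivial_solution[OF assms])
    show "(of_int d + 1) * (of_int d * P 0 0 d + 2 * P 2 0 (d - 2)) = 0"
      using H2_row[of 2 d 0] P_neg[of 2 "-2" d] by (simp add: algebra_simps)
    show "(of_int d + 1) * (of_int d * P 0 0 d + 2 * P 0 2 (d - 2)) = 0"
      using H3_row[of 2 d 0] P_neg[of "-2" 2 d] by (simp add: algebra_simps)
    have "6 * (P 2 0 (d - 2) + P 0 2 (d - 2)) = 0"
      using H1_row[of 2 2 "d - 2"] H1_recurrences_vanish_off_axes[of 2 2 "d - 4"]
      by (simp add: algebra_simps)
    then show "P 2 0 (d - 2) + P 0 2 (d - 2) = 0"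
      by (metis mult_eq_0_iff zero_neq_numeral)
  qed
qed

lemma H1_recurrences_only_constant:
  assumes "(i, j, k) \<noteq> (0, 0, 0)"
  shows "P i j k = 0"
proof (cases "i < 0 \<or> j < 0 \<or> k < 0")
  case True
  then show ?thesis using P_neg by blast
next
  case False
  then consider "0 < i" "j = 0" "k = 0" | "i = 0" "0 < j" "k = 0" | "i = 0" "j = 0" "0 < k"
    | "0 < i \<and> 0 < j \<or> 0 < i \<and> 0 < k \<or> 0 < j \<and> 0 < k"
    using assms by (auto simp: not_less le_less)
  then show ?thesis
    by cases (auto intro: H1_recurrences_vanish_on_axes H1_recurrences_vanish_off_axes)
qed

end

theorem mainTheorem8:
  fixes p :: mpoly3
  assumes "is_poly3 p"
    and "\<And>x12 x13 x23. x12 \<noteq> 0 \<Longrightarrow> x13 \<noteq> 0 \<Longrightarrow> H1 p x12 x13 x23 = 0"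
    and "\<And>x12 x13 x23. x12 \<noteq> 0 \<Longrightarrow> x23 \<noteq> 0 \<Longrightarrow> H2 p x12 x13 x23 = 0"
    and "\<And>x12 x13 x23. x13 \<noteq> 0 \<Longrightarrow> x23 \<noteq> 0 \<Longrightarrow> H3 p x12 x13 x23 = 0"
  shows "is_const3 p"
proof -
  have "coeff3 p i j k = 0" if "(i, j, k) \<noteq> (0, 0, 0)" for i j k
    using coeff3_neg H1_recurrence_if_H1_eq_0[OF assms(1,2)]
      H1_recurrence_if_H2_eq_0[OF assms(1,3)] H1_recurrence_if_H3_eq_0[OF assms(1,4)] that
    by (rule H1_recurrences_only_constant)
  then show ?thesis
    by (rule is_const3_if_coeff3_eq_0)
qed

end
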